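(* Let $(f_n)_{n\in\mathbb{N}}$ be a family of polynomials over $\mathbb{C}$, $f_n$ in $n$ variables, of degree at most $\mathrm{poly}(n)$, such that $f_n$ has a constant-free arithmetic circuit of size at most $\mathrm{poly}(n)$. Then $f_n$ has a constant-free almost-MD arithmetic circuit of size at most $\mathrm{poly}(n)$.
   Context: An arithmetic circuit has input nodes labeled by variables or constants and internal addition and multiplication gates (fan-in two for multiplication); size is the number of edges/gates. It is constant-free if its only constant inputs are $0,1,-1$. A gate $v$ is constant producing if every input node of the subcircuit rooted at $v$ is a field constant. A circuit is almost-MD if every multiplication gate either multiplies two disjoint subcircuits or has at least one child that is constant producing. *)

theory Defs
  imports Complex_Main "HOL-Library.Poly_Mapping"
begin

text \<open>Multivariate polynomials over the complex numbers in variables x_0, x_1, ...: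
  finitely supported maps from monomials (exponent vectors, nat =>0 nat) to coefficients.
  Multiplication is the convolution product provided by Poly_Mapping.\<close>
type_synonym mpoly = "(nat \<Rightarrow>\<^sub>0 nat) \<Rightarrow>\<^sub>0 complex"

definition mvar :: "nat \<Rightarrow> mpoly" where
  "mvar i = Poly_Mapping.single (Poly_Mapping.single i 1) 1"

definition mconst :: "complex \<Rightarrow> mpoly" where
  "mconst c = Poly_Mapping.single 0 c"

definition mon_deg :: "(nat \<Rightarrow>\<^sub>0 nat) \<Rightarrow> nat" where
  "mon_deg m = (\<Sum>i\<in>Poly_Mapping.keys m. Poly_Mapping.lookup m i)"

text \<open>Total degree (the zero polynomial gets degree 0).\<close>
definition total_deg :: "mpoly \<Rightarrow> nat" where
  "total_deg p = Max (insert 0 (mon_deg ` Poly_Mapping.keys p))"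

definition vars_in :: "nat \<Rightarrow> mpoly \<Rightarrow> bool" where
  "vars_in n p \<longleftrightarrow> (\<forall>m\<in>Poly_Mapping.keys p. Poly_Mapping.keys m \<subseteq> {..<n})"

text \<open>Arithmetic circuits as DAGs in topological order: a list of gates, where gate number i
  may only refer to gates with smaller numbers.\<close>
datatype gate = Inp nat | Cst complex | AddG "nat list" | MulG nat nat

type_synonym circuit = "gate list"

fun children :: "gate \<Rightarrow> nat list" where
  "children (Inp _) = []"
| "children (Cst _) = []"
| "children (AddG js) = js"
| "children (MulG j k) = [j, k]"

definition wf_circuit :: "nat \<Rightarrow> circuit \<Rightarrow> bool" where
  "wf_circuit n C \<longleftrightarrow> C \<noteq> [] \<and>
     (\<forall>i<length C. (\<forall>j\<in>set (children (C ! i)). j < i)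
        \<and> (\<forall>js. C ! i = AddG js \<longrightarrow> js \<noteq> [])
        \<and> (\<forall>v. C ! i = Inp v \<longrightarrow> v < n))"

fun gate_val :: "mpoly list \<Rightarrow> gate \<Rightarrow> mpoly" where
  "gate_val vs (Inp v) = mvar v"
| "gate_val vs (Cst c) = mconst c"
| "gate_val vs (AddG js) = sum_list (map (\<lambda>j. vs ! j) js)"
| "gate_val vs (MulG j k) = (vs ! j) * (vs ! k)"

definition circ_vals :: "circuit \<Rightarrow> mpoly list" where
  "circ_vals C = foldl (\<lambda>vs g. vs @ [gate_val vs g]) [] C"

definition computes :: "circuit \<Rightarrow> mpoly \<Rightarrow> bool" where
  "computes C f \<longleftrightarrow> last (circ_vals C) = f"

definition circ_size :: "circuit \<Rightarrow> nat" where
  "circ_size C = length C + (\<Sum>g\<leftarrow>C. length (children g))"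

definition constant_free :: "circuit \<Rightarrow> bool" where
  "constant_free C \<longleftrightarrow> (\<forall>g\<in>set C. \<forall>c. g = Cst c \<longrightarrow> c \<in> {0, 1, -1})"

inductive_set subcirc :: "circuit \<Rightarrow> nat \<Rightarrow> nat set" for C v where
  root: "v \<in> subcirc C v"
| step: "u \<in> subcirc C v \<Longrightarrow> u < length C \<Longrightarrow> j \<in> set (children (C ! u)) \<Longrightarrow> j \<in> subcirc C v"

definition const_producing :: "circuit \<Rightarrow> nat \<Rightarrow> bool" where
  "const_producing C v \<longleftrightarrow> (\<forall>u\<in>subcirc C v. \<forall>x. C ! u \<noteq> Inp x)"

definition almost_MD :: "circuit \<Rightarrow> bool" where
  "almost_MD C \<longleftrightarrow> (\<forall>i<length C. \<forall>j k. C ! i = MulG j k \<longrightarrow>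
      subcirc C j \<inter> subcirc C k = {} \<or> const_producing C j \<or> const_producing C k)"

definition poly_bounded :: "(nat \<Rightarrow> nat) \<Rightarrow> bool" where
  "poly_bounded g \<longleftrightarrow> (\<exists>c. \<forall>n. g n \<le> c * n ^ c + c)"

end

theory Submission
  imports Defs
begin

(* Fix D above the degree of the output. Every gate g of the given circuit is
   replaced by gates computing its homogeneous parts of degree < D, the part of degree d being
   computed once for each interval [a, b] of positions in {0..<D} with b - a + 1 = d.  For a
   product gate, the part of degree d on [a, b] is the sum over i of the product of the part of
   degree i of the first factor on [a, a + i - 1] and the part of degree d - i of the second one
   on [a + i, b]; the subcircuits below these two gates only involve subintervals of these two
   disjoint intervals, so they are disjoint.  The terms i = 0 and i = d use degree 0 parts,
   which are computed from constants alone.  This blows the size up by a factor O(D^3), and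
   the output is the sum of the parts of the output gate. *)

section \<open>Homogeneous parts\<close>

definition homogeneous_part :: "nat \<Rightarrow> mpoly \<Rightarrow> mpoly" where
  "homogeneous_part k p = Poly_Mapping.mapp (\<lambda>m c. if mon_deg m = k then c else 0) p"

lemma lookup_homogeneous_part:
  "Poly_Mapping.lookup (homogeneous_part k p) m = (if mon_deg m = k then Poly_Mapping.lookup p m else 0)"
  by (auto simp: homogeneous_part_def lookup_mapp when_def in_keys_iff)

lemma homogeneous_part_add: "homogeneous_part k (p + q) = homogeneous_part k p + homogeneous_part k q"
  by (rule poly_mapping_eqI) (simp add: lookup_homogeneous_part lookup_add)

lemma homogeneous_part_zero [simp]: "homogeneous_part k 0 = 0"
  by (rule poly_mapping_eqI) (simp add: lookup_homogeneous_part)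

lemma homogeneous_part_sum: "homogeneous_part k (sum F A) = (\<Sum>a\<in>A. homogeneous_part k (F a))"
  by (rule poly_mapping_eqI) (simp add: lookup_homogeneous_part lookup_sum)

lemma homogeneous_part_sum_list:
  "homogeneous_part k (sum_list (map F xs)) = sum_list (map (\<lambda>x. homogeneous_part k (F x)) xs)"
  by (induction xs) (simp_all add: homogeneous_part_add)

lemma homogeneous_part_eq_if_keys_deg:
  assumes "\<And>m. m \<in> Poly_Mapping.keys p \<Longrightarrow> mon_deg m = e"
  shows "homogeneous_part k p = (if k = e then p else 0)"
  using assms by (intro poly_mapping_eqI) (auto simp: lookup_homogeneous_part in_keys_iff)

lemma mon_deg_keys_homogeneous_part: "m \<in> Poly_Mapping.keys (homogeneous_part k p) \<Longrightarrow> mon_deg m = k"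
  by (auto simp: in_keys_iff lookup_homogeneous_part split: if_splits)

lemma homogeneous_part_mvar: "homogeneous_part k (mvar x) = (if k = 1 then mvar x else 0)"
  unfolding mvar_def by (rule homogeneous_part_eq_if_keys_deg) (simp add: mon_deg_def)

lemma homogeneous_part_mconst: "homogeneous_part k (mconst c) = (if k = 0 then mconst c else 0)"
  unfolding mconst_def by (rule homogeneous_part_eq_if_keys_deg) (auto simp: mon_deg_def split: if_splits)

lemma mconst_0 [simp]: "mconst 0 = 0"
  by (simp add: mconst_def)

lemma mon_deg_eq_sum_lookup:
  "finite S \<Longrightarrow> Poly_Mapping.keys m \<subseteq> S \<Longrightarrow> mon_deg m = sum (Poly_Mapping.lookup m) S"
  unfolding mon_deg_def by (rule sum.mono_neutral_left) (auto simp: in_keys_iff)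

lemma mon_deg_add: "mon_deg (m + m') = mon_deg m + mon_deg m'"
proof -
  let ?S = "Poly_Mapping.keys m \<union> Poly_Mapping.keys m'"
  have "mon_deg (m + m') = sum (Poly_Mapping.lookup (m + m')) ?S"
    using keys_add[of m m'] by (intro mon_deg_eq_sum_lookup) auto
  also have "\<dots> = sum (Poly_Mapping.lookup m) ?S + sum (Poly_Mapping.lookup m') ?S"
    by (simp add: lookup_add sum.distrib)
  also have "\<dots> = mon_deg m + mon_deg m'"
    by (subst (1 2) mon_deg_eq_sum_lookup) auto
  finally show ?thesis .
qed

lemma homogeneous_part_mult_homogeneous_parts:
  "homogeneous_part k (homogeneous_part i p * homogeneous_part j q) =
     (if k = i + j then homogeneous_part i p * homogeneous_part j q else 0)"
proof (rule homogeneous_part_eq_if_keys_deg)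
  fix m assume "m \<in> Poly_Mapping.keys (homogeneous_part i p * homogeneous_part j q)"
  then obtain m1 m2 where "m = m1 + m2" "m1 \<in> Poly_Mapping.keys (homogeneous_part i p)"
      "m2 \<in> Poly_Mapping.keys (homogeneous_part j q)"
    using keys_mult by blast
  then show "mon_deg m = i + j" by (simp add: mon_deg_add mon_deg_keys_homogeneous_part)
qed

lemma mon_deg_le_total_deg: "m \<in> Poly_Mapping.keys p \<Longrightarrow> mon_deg m \<le> total_deg p"
  unfolding total_deg_def by (auto intro: Max_ge)

lemma sum_homogeneous_parts: "total_deg p \<le> N \<Longrightarrow> (\<Sum>k\<le>N. homogeneous_part k p) = p"
proof (rule poly_mapping_eqI)
  fix m assume "total_deg p \<le> N"
  then show "Poly_Mapping.lookup (\<Sum>k\<le>N. homogeneous_part k p) m = Poly_Mapping.lookup p m"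
    using mon_deg_le_total_deg[of m p]
    by (cases "Poly_Mapping.lookup p m = 0") (auto simp: lookup_sum lookup_homogeneous_part in_keys_iff)
qed

lemma homogeneous_part_mult:
  "homogeneous_part k (p * q) = (\<Sum>i\<le>k. homogeneous_part i p * homogeneous_part (k - i) q)"
proof -
  define N where "N = total_deg p + total_deg q + k"
  have "p * q = (\<Sum>i\<le>N. homogeneous_part i p) * (\<Sum>j\<le>N. homogeneous_part j q)"
    using sum_homogeneous_parts[of p N] sum_homogeneous_parts[of q N] by (simp add: N_def)
  also have "\<dots> = (\<Sum>i\<le>N. \<Sum>j\<le>N. homogeneous_part i p * homogeneous_part j q)"
    by (rule sum_product)
  finally have "homogeneous_part k (p * q) =
      (\<Sum>i\<le>N. \<Sum>j\<le>N. if k = i + j then homogeneous_part i p * homogeneous_part j q else 0)"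
    by (simp add: homogeneous_part_sum homogeneous_part_mult_homogeneous_parts)
  also have "\<dots> = (\<Sum>i\<le>N. if i \<le> k then homogeneous_part i p * homogeneous_part (k - i) q else 0)"
  proof (rule sum.cong)
    fix i
    have "(k = i + j) = (i \<le> k \<and> j = k - i)" for j by arith
    then show "(\<Sum>j\<le>N. if k = i + j then homogeneous_part i p * homogeneous_part j q else 0) =
        (if i \<le> k then homogeneous_part i p * homogeneous_part (k - i) q else 0)"
      by (cases "i \<le> k") (auto simp: N_def)
  qed simp
  also have "\<dots> = (\<Sum>i\<le>k. homogeneous_part i p * homogeneous_part (k - i) q)"
    by (simp add: sum.If_cases N_def Int_absorb1 subset_eq flip: atMost_def)
  finally show ?thesis .
qed

section \<open>Evaluation of circuits\<close>

definition topologically_ordered :: "circuit \<Rightarrow> bool" where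
  "topologically_ordered C \<longleftrightarrow> (\<forall>i<length C. \<forall>j\<in>set (children (C ! i)). j < i)"

lemma circ_vals_Nil [simp]: "circ_vals [] = []"
  by (simp add: circ_vals_def)

lemma circ_vals_snoc: "circ_vals (C @ [g]) = circ_vals C @ [gate_val (circ_vals C) g]"
  by (simp add: circ_vals_def)

lemma length_circ_vals [simp]: "length (circ_vals C) = length C"
  by (induction C rule: rev_induct) (simp_all add: circ_vals_snoc)

lemma take_circ_vals: "i \<le> length C \<Longrightarrow> take i (circ_vals C) = circ_vals (take i C)"
proof (induction C arbitrary: i rule: rev_induct)
  case (snoc g C)
  then show ?case
    by (cases "i \<le> length C") (simp_all add: circ_vals_snoc)
qed simp

lemma gate_val_take:
  "(\<And>j. j \<in> set (children g) \<Longrightarrow> j < i) \<Longrightarrow> i \<le> length vs \<Longrightarrow>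
    gate_val (take i vs) g = gate_val vs g"
  by (cases g) (auto intro!: arg_cong[where f=sum_list])

lemma nth_circ_vals:
  assumes "topologically_ordered C" and "i < length C"
  shows "circ_vals C ! i = gate_val (circ_vals C) (C ! i)"
proof -
  have "circ_vals C ! i = circ_vals (take i C @ [C ! i]) ! i"
    using assms(2) by (simp add: take_circ_vals[symmetric] flip: take_Suc_conv_app_nth)
  also have "\<dots> = gate_val (take i (circ_vals C)) (C ! i)"
    using assms(2) by (simp add: circ_vals_snoc nth_append take_circ_vals)
  also have "\<dots> = gate_val (circ_vals C) (C ! i)"
    using assms unfolding topologically_ordered_def by (intro gate_val_take) auto
  finally show ?thesis .
qed

lemma last_circ_vals: "C \<noteq> [] \<Longrightarrow> last (circ_vals C) = circ_vals C ! (length C - 1)"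
  by (metis last_conv_nth length_0_conv length_circ_vals)

section \<open>The homogenized circuit\<close>

lemma mixed_radix_less: "(x::nat) < r \<Longrightarrow> y < y' \<Longrightarrow> y * r + x < y' * r + x'"
proof -
  assume "x < r" "y < y'"
  then have "y * r + x < (y + 1) * r" by simp
  also have "\<dots> \<le> y' * r" using \<open>y < y'\<close> by (intro mult_le_mono1) simp
  finally show ?thesis by simp
qed

locale homogenization =
  fixes C :: circuit and D :: nat
  assumes ordered: "topologically_ordered C" and D_pos: "0 < D" and C_nonempty: "C \<noteq> []"
begin

definition idx :: "nat \<Rightarrow> nat \<Rightarrow> nat \<Rightarrow> nat \<Rightarrow> nat" where
  "idx g a b t = ((g * D + a) * D + b) * (D + 3) + t"

definition slot_of :: "nat \<Rightarrow> nat" where "slot_of i = i mod (D + 3)"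
definition hi_of :: "nat \<Rightarrow> nat" where "hi_of i = i div (D + 3) mod D"
definition lo_of :: "nat \<Rightarrow> nat" where "lo_of i = i div (D + 3) div D mod D"
definition gate_of :: "nat \<Rightarrow> nat" where "gate_of i = i div (D + 3) div D div D"

definition hlen :: nat where "hlen = length C * D * D * (D + 3)"

lemma decode_idx [simp]:
  assumes "a < D" "b < D" "t < D + 3"
  shows "slot_of (idx g a b t) = t" "hi_of (idx g a b t) = b" "lo_of (idx g a b t) = a"
    "gate_of (idx g a b t) = g"
  using assms by (simp_all add: slot_of_def hi_of_def lo_of_def gate_of_def idx_def)

lemma idx_decode: "idx (gate_of i) (lo_of i) (hi_of i) (slot_of i) = i"
  unfolding idx_def gate_of_def lo_of_def hi_of_def slot_of_def by (metis div_mult_mod_eq)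

lemma decode_bounds: "slot_of i < D + 3" "hi_of i < D" "lo_of i < D" "i < hlen \<Longrightarrow> gate_of i < length C"
  using D_pos by (auto simp: slot_of_def hi_of_def lo_of_def gate_of_def hlen_def
      less_mult_imp_div_less mult.assoc div_less_iff_less_mult div_mult2_eq[symmetric]
      mult.commute[of "D + 3"])

lemma idx_less_hlen: "g < length C \<Longrightarrow> a < D \<Longrightarrow> b < D \<Longrightarrow> t < D + 3 \<Longrightarrow> idx g a b t < hlen"
  using mixed_radix_less[of a D g "length C" 0] mixed_radix_less[of b D "g * D + a" "length C * D" 0]
    mixed_radix_less[of t "D + 3" "(g * D + a) * D + b" "length C * D * D" 0]
  by (simp add: idx_def hlen_def)

lemma idx_less_idx_gate:
  "h < g \<Longrightarrow> a' < D \<Longrightarrow> b' < D \<Longrightarrow> t' < D + 3 \<Longrightarrow> idx h a' b' t' < idx g a b t"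
  using mixed_radix_less[of a' D h g a] mixed_radix_less[of b' D "h * D + a'" "g * D + a" b]
    mixed_radix_less[of t' "D + 3" "(h * D + a') * D + b'" "(g * D + a) * D + b" t]
  by (simp add: idx_def)

lemma idx_less_idx_slot: "t' < t \<Longrightarrow> idx g a b t' < idx g a b t"
  by (simp add: idx_def)

(* The gates (g, a, b, t) with a \<le> b and t > 0 refine gate g by the position interval [a, b]:
   slot D + 2 computes the homogeneous part of degree b - a + 1 of g, as the sum of the
   slots 1, ..., b - a + 2, where slot i + 1 holds the i-th product term of a product gate.
   Slot 0 computes the constant term of g without reading any input. *)
definition hgate :: "nat \<Rightarrow> nat \<Rightarrow> nat \<Rightarrow> nat \<Rightarrow> gate" where
  "hgate g a b t =
   (if t = 0 then
      (case C ! g of Inp x \<Rightarrow> Cst 0 | Cst c \<Rightarrow> Cst c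
        | AddG js \<Rightarrow> AddG (map (\<lambda>h. idx h a b 0) js)
        | MulG h1 h2 \<Rightarrow> MulG (idx h1 a b 0) (idx h2 a b 0))
    else if b < a then Cst 0
    else if t = D + 2 then
      (case C ! g of Inp x \<Rightarrow> if a = b then Inp x else Cst 0 | Cst c \<Rightarrow> Cst 0
        | AddG js \<Rightarrow> AddG (map (\<lambda>h. idx h a b (D + 2)) js)
        | MulG h1 h2 \<Rightarrow> AddG (map (\<lambda>i. idx g a b (Suc i)) [0..<Suc (Suc (b - a))]))
    else
      (case C ! g of
        MulG h1 h2 \<Rightarrow>
          (if t = 1 then MulG (idx h1 a b 0) (idx h2 a b (D + 2))
           else if t = b - a + 2 then MulG (idx h1 a b (D + 2)) (idx h2 a b 0)
           else if t < b - a + 2 then MulG (idx h1 a (a + t - 2) (D + 2)) (idx h2 (a + t - 1) b (D + 2))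
           else Cst 0)
      | _ \<Rightarrow> Cst 0))"

definition hout :: gate where
  "hout = AddG (map (\<lambda>k. if k = 0 then idx (length C - 1) 0 0 0
                         else idx (length C - 1) 0 (k - 1) (D + 2)) [0..<D])"

definition hcirc :: circuit where
  "hcirc = map (\<lambda>i. hgate (gate_of i) (lo_of i) (hi_of i) (slot_of i)) [0..<hlen] @ [hout]"

lemma length_hcirc [simp]: "length hcirc = Suc hlen"
  by (simp add: hcirc_def)

lemma nth_hcirc: "i < hlen \<Longrightarrow> hcirc ! i = hgate (gate_of i) (lo_of i) (hi_of i) (slot_of i)"
  by (simp add: hcirc_def nth_append)

lemma nth_hcirc_hlen [simp]: "hcirc ! hlen = hout"
  by (simp add: hcirc_def nth_append)

lemma children_less: "g < length C \<Longrightarrow> h \<in> set (children (C ! g)) \<Longrightarrow> h < g"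
  using ordered by (auto simp: topologically_ordered_def)

lemma children_hgate:
  assumes g: "g < length C" and ab: "a < D" "b < D" and t: "t < D + 3"
    and j: "j \<in> set (children (hgate g a b t))"
  shows "j < idx g a b t \<and> j < hlen \<and> (t = 0 \<longrightarrow> slot_of j = 0)
     \<and> (a \<le> b \<longrightarrow> a \<le> lo_of j \<and> hi_of j \<le> b \<and> lo_of j \<le> hi_of j)"
proof -
  have h: "h < g" "h < length C" if "h \<in> set (children (C ! g))" for h
    using children_less[OF g that] g by auto
  show ?thesis
  proof (cases "C ! g")
    case (AddG js)
    then show ?thesis using j ab t h
      by (auto simp: hgate_def idx_less_idx_gate idx_less_hlen split: if_splits)
  next
    case (MulG h1 h2)
    then have "h1 < g" "h2 < g" "h1 < length C" "h2 < length C" using h by auto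
    moreover have "idx g a b (Suc i) < idx g a b t" "idx g a b (Suc i) < hlen"
      if "t = D + 2" "i < Suc (Suc (b - a))" for i
      using that ab g by (auto simp: idx_less_idx_slot idx_less_hlen)
    ultimately show ?thesis using j MulG ab t
      by (auto simp: hgate_def idx_less_idx_gate idx_less_hlen split: if_splits)
  qed (use j in \<open>auto simp: hgate_def split: if_splits\<close>)
qed

lemma nth_hcirc_decode:
  "i < hlen \<Longrightarrow> hcirc ! i = hgate (gate_of i) (lo_of i) (hi_of i) (slot_of i) \<and>
     gate_of i < length C \<and> lo_of i < D \<and> hi_of i < D \<and> slot_of i < D + 3"
  using decode_bounds[of i] by (simp add: nth_hcirc)

lemma hcirc_ordered: "topologically_ordered hcirc"
  unfolding topologically_ordered_def
proof (intro allI impI ballI)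
  fix i j assume i: "i < length hcirc" and j: "j \<in> set (children (hcirc ! i))"
  show "j < i"
  proof (cases "i < hlen")
    case True
    then show ?thesis
      using j children_hgate[of "gate_of i" "lo_of i" "hi_of i" "slot_of i" j] nth_hcirc_decode[of i]
      by (simp add: idx_decode)
  next
    case False
    then have "i = hlen" using i by simp
    moreover have "j < hlen" using j D_pos C_nonempty
      by (auto simp: \<open>i = hlen\<close> hout_def intro!: idx_less_hlen)
    ultimately show ?thesis by simp
  qed
qed

abbreviation vals :: "mpoly list" where "vals \<equiv> circ_vals C"
abbreviation hvals :: "mpoly list" where "hvals \<equiv> circ_vals hcirc"

lemma hvals_idx:
  "g < length C \<Longrightarrow> a < D \<Longrightarrow> b < D \<Longrightarrow> t < D + 3 \<Longrightarrow>
    hvals ! idx g a b t = gate_val hvals (hgate g a b t)"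
  using nth_circ_vals[OF hcirc_ordered, of "idx g a b t"] idx_less_hlen[of g a b t]
  by (simp add: nth_hcirc)

lemma vals_nth: "g < length C \<Longrightarrow> vals ! g = gate_val vals (C ! g)"
  using nth_circ_vals[OF ordered] by simp

definition parts_correct :: "nat \<Rightarrow> bool" where
  "parts_correct h \<longleftrightarrow>
     (\<forall>a<D. \<forall>b<D. hvals ! idx h a b 0 = homogeneous_part 0 (vals ! h)) \<and>
     (\<forall>a b. a \<le> b \<longrightarrow> b < D \<longrightarrow>
        hvals ! idx h a b (D + 2) = homogeneous_part (Suc (b - a)) (vals ! h))"

lemma parts_correct_Inp: "g < length C \<Longrightarrow> C ! g = Inp x \<Longrightarrow> parts_correct g"
  by (auto simp: parts_correct_def hvals_idx vals_nth hgate_def homogeneous_part_mvar)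

lemma parts_correct_Cst: "g < length C \<Longrightarrow> C ! g = Cst c \<Longrightarrow> parts_correct g"
  by (auto simp: parts_correct_def hvals_idx vals_nth hgate_def homogeneous_part_mconst)

lemma parts_correct_AddG:
  assumes g: "g < length C" "C ! g = AddG js" and IH: "\<And>h. h \<in> set js \<Longrightarrow> parts_correct h"
  shows "parts_correct g"
proof -
  have js: "h < length C" if "h \<in> set js" for h
    using children_less[of g h] g that by auto
  have "hvals ! idx g a b t = sum_list (map (\<lambda>h. hvals ! idx h a b t) js)"
    if "a < D" "b < D" "t = 0 \<or> a \<le> b \<and> t = D + 2" for a b t
    using g that by (auto simp: hvals_idx hgate_def comp_def)
  then show ?thesis
    using IH js g unfolding parts_correct_def
    by (auto simp: vals_nth homogeneous_part_sum_list intro!: arg_cong[where f=sum_list] map_cong)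
qed

lemma hvals_product_slot:
  assumes g: "g < length C" "C ! g = MulG h1 h2" and IH: "parts_correct h1" "parts_correct h2"
    and ab: "a \<le> b" "b < D" and i: "i \<le> Suc (b - a)"
  shows "hvals ! idx g a b (Suc i) =
    homogeneous_part i (vals ! h1) * homogeneous_part (Suc (b - a) - i) (vals ! h2)"
proof -
  have "Suc i < D + 2" using i ab by simp
  then have "hvals ! idx g a b (Suc i) = gate_val hvals (hgate g a b (Suc i))"
    using g ab by (simp add: hvals_idx)
  moreover consider "i = 0" | "i = Suc (b - a)" | "0 < i" "i < Suc (b - a)"
    using i by linarith
  ultimately show ?thesis
    using g ab IH unfolding parts_correct_def
    by cases (auto simp: hgate_def Suc_diff_le)
qed

lemma parts_correct_MulG:
  assumes g: "g < length C" "C ! g = MulG h1 h2" and IH: "parts_correct h1" "parts_correct h2"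
  shows "parts_correct g"
  unfolding parts_correct_def
proof (intro conjI allI impI)
  have h: "h1 < length C" "h2 < length C"
    using children_less[of g] g by fastforce+
  then have vals_g: "vals ! g = vals ! h1 * vals ! h2"
    using g by (simp add: vals_nth)
  fix a b
  show "hvals ! idx g a b 0 = homogeneous_part 0 (vals ! g)" if "a < D" "b < D"
    using g IH that by (simp add: parts_correct_def hvals_idx hgate_def vals_g homogeneous_part_mult)
  assume ab: "a \<le> b" "b < D"
  define k where "k = Suc (b - a)"
  have "hvals ! idx g a b (D + 2) = sum_list (map (\<lambda>i. hvals ! idx g a b (Suc i)) [0..<Suc k])"
    using g ab by (simp add: hvals_idx hgate_def k_def comp_def)
  also have "\<dots> = (\<Sum>i\<le>k. hvals ! idx g a b (Suc i))"
    by (simp only: interv_sum_list_conv_sum_set_nat set_upt atLeast0LessThan lessThan_Suc_atMost)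
  also have "\<dots> = (\<Sum>i\<le>k. homogeneous_part i (vals ! h1) * homogeneous_part (k - i) (vals ! h2))"
    using hvals_product_slot[OF g IH ab] by (simp add: k_def)
  also have "\<dots> = homogeneous_part k (vals ! g)"
    by (simp add: vals_g homogeneous_part_mult)
  finally show "hvals ! idx g a b (D + 2) = homogeneous_part (Suc (b - a)) (vals ! g)"
    by (simp add: k_def)
qed

lemma parts_correct: "g < length C \<Longrightarrow> parts_correct g"
proof (induction g rule: less_induct)
  case (less g)
  have IH: "parts_correct h" if "h \<in> set (children (C ! g))" for h
    using less children_less[OF less.prems that] by auto
  show ?case
    using less.prems IH
    by (cases "C ! g") (auto intro: parts_correct_Inp parts_correct_Cst parts_correct_AddG parts_correct_MulG)
qed

lemma hcirc_computes:
  assumes "total_deg (last vals) < D"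
  shows "computes hcirc (last vals)"
proof -
  define p where "p = last vals"
  have p: "p = vals ! (length C - 1)" and parts: "parts_correct (length C - 1)"
    using C_nonempty parts_correct by (simp_all add: p_def last_circ_vals)
  have "hcirc \<noteq> []"
    using length_hcirc by (metis Zero_not_Suc list.size(3))
  then have "last hvals = gate_val hvals hout"
    using nth_circ_vals[OF hcirc_ordered, of hlen] by (simp add: last_circ_vals)
  also have "\<dots> = sum_list (map (\<lambda>k. homogeneous_part k p) [0..<D])"
    using parts D_pos unfolding hout_def parts_correct_def p
    by (auto intro!: arg_cong[where f=sum_list] map_cong)
  also have "\<dots> = (\<Sum>k<D. homogeneous_part k p)"
    by (simp add: interv_sum_list_conv_sum_set_nat atLeast0LessThan)
  also have "{..<D} = {..D - 1}"
    using D_pos by auto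
  also have "(\<Sum>k\<le>D - 1. homogeneous_part k p) = p"
    using assms D_pos by (intro sum_homogeneous_parts) (simp add: p_def)
  finally show ?thesis by (simp add: computes_def p_def)
qed

lemma hgate_AddG_nonempty:
  "C ! g \<noteq> AddG [] \<Longrightarrow> hgate g a b t = AddG js \<Longrightarrow> js \<noteq> []"
  by (cases "C ! g") (auto simp: hgate_def split: if_splits)

lemma hgate_Inp: "hgate g a b t = Inp v \<Longrightarrow> C ! g = Inp v"
  by (cases "C ! g") (auto simp: hgate_def split: if_splits)

lemma hgate_Cst: "hgate g a b t = Cst c \<Longrightarrow> c = 0 \<or> C ! g = Cst c"
  by (cases "C ! g") (auto simp: hgate_def split: if_splits)

lemma hgate_slot0_not_Inp: "hgate g a b 0 \<noteq> Inp v"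
  by (cases "C ! g") (auto simp: hgate_def)

lemma hcirc_wf:
  assumes "wf_circuit n C"
  shows "wf_circuit n hcirc"
  unfolding wf_circuit_def
proof (intro conjI allI impI ballI)
  have C: "C ! g \<noteq> AddG []" "C ! g = Inp v \<Longrightarrow> v < n" if "g < length C" for g v
    using assms that unfolding wf_circuit_def by auto
  show "hcirc \<noteq> []"
    by (simp add: hcirc_def)
  fix i assume i: "i < length hcirc"
  show "j < i" if "j \<in> set (children (hcirc ! i))" for j
    using hcirc_ordered i that by (auto simp: topologically_ordered_def)
  show "js \<noteq> []" if "hcirc ! i = AddG js" for js
  proof (cases "i < hlen")
    case True
    then show ?thesis using that nth_hcirc_decode[of i] C hgate_AddG_nonempty by metis
  qed (use i that D_pos in \<open>auto simp: less_Suc_eq hout_def\<close>)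
  show "v < n" if "hcirc ! i = Inp v" for v
  proof (cases "i < hlen")
    case True
    then show ?thesis using that nth_hcirc_decode[of i] C hgate_Inp by metis
  qed (use i that in \<open>auto simp: less_Suc_eq hout_def\<close>)
qed

lemma hcirc_constant_free: "constant_free C \<Longrightarrow> constant_free hcirc"
  unfolding constant_free_def
proof (intro ballI allI impI)
  assume C: "\<forall>g\<in>set C. \<forall>c. g = Cst c \<longrightarrow> c \<in> {0, 1, - 1}"
  fix x c assume "x \<in> set hcirc" and x: "x = Cst c"
  then obtain i where i: "i < length hcirc" "hcirc ! i = Cst c"
    by (auto simp: in_set_conv_nth)
  show "c \<in> {0, 1, - 1}"
  proof (cases "i < hlen")
    case True
    then have "c = 0 \<or> C ! gate_of i = Cst c" "C ! gate_of i \<in> set C"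
      using i nth_hcirc_decode[of i] hgate_Cst by auto
    then show ?thesis using C by auto
  qed (use i in \<open>auto simp: less_Suc_eq hout_def\<close>)
qed

lemma subcirc_hcirc_interval:
  "u \<in> subcirc hcirc v \<Longrightarrow> v < hlen \<Longrightarrow> lo_of v \<le> hi_of v \<Longrightarrow>
    u < hlen \<and> lo_of v \<le> lo_of u \<and> hi_of u \<le> hi_of v \<and> lo_of u \<le> hi_of u"
proof (induction rule: subcirc.induct)
  case (step u j)
  then show ?case
    using children_hgate[of "gate_of u" "lo_of u" "hi_of u" "slot_of u" j] nth_hcirc_decode[of u]
    by auto
qed simp

lemma subcirc_hcirc_slot0:
  "u \<in> subcirc hcirc v \<Longrightarrow> v < hlen \<Longrightarrow> slot_of v = 0 \<Longrightarrow> u < hlen \<and> slot_of u = 0"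
proof (induction rule: subcirc.induct)
  case (step u j)
  then show ?case
    using children_hgate[of "gate_of u" "lo_of u" "hi_of u" "slot_of u" j] nth_hcirc_decode[of u]
    by auto
qed simp

lemma const_producing_slot0: "v < hlen \<Longrightarrow> slot_of v = 0 \<Longrightarrow> const_producing hcirc v"
  unfolding const_producing_def
  using subcirc_hcirc_slot0 nth_hcirc_decode hgate_slot0_not_Inp by metis

lemma disjoint_subcircs_hcirc:
  assumes "j < hlen" "k < hlen" "lo_of j \<le> hi_of j" "lo_of k \<le> hi_of k" "hi_of j < lo_of k"
  shows "subcirc hcirc j \<inter> subcirc hcirc k = {}"
proof -
  have False if "u \<in> subcirc hcirc j" "u \<in> subcirc hcirc k" for u
    using subcirc_hcirc_interval[OF that(1)] subcirc_hcirc_interval[OF that(2)] assms by simp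
  then show ?thesis by blast
qed

lemma hgate_MulG_cases:
  assumes g: "g < length C" and ab: "a < D" "b < D" and t: "t < D + 3"
    and m: "hgate g a b t = MulG j k"
  shows "slot_of j = 0 \<or> slot_of k = 0 \<or>
    lo_of j \<le> hi_of j \<and> lo_of k \<le> hi_of k \<and> hi_of j < lo_of k"
proof (cases "C ! g")
  case (MulG h1 h2)
  then have "h1 < length C" "h2 < length C"
    using children_less[OF g] g by fastforce+
  then show ?thesis
    using m MulG ab t by (auto simp: hgate_def split: if_splits)
qed (use m in \<open>auto simp: hgate_def split: if_splits\<close>)

lemma hcirc_almost_MD: "almost_MD hcirc"
  unfolding almost_MD_def
proof (intro allI impI)
  fix i j k assume i: "i < length hcirc" and m: "hcirc ! i = MulG j k"
  have "i < hlen"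
    using i m by (auto simp: less_Suc_eq hout_def)
  then have dec: "hgate (gate_of i) (lo_of i) (hi_of i) (slot_of i) = MulG j k"
      "gate_of i < length C" "lo_of i < D" "hi_of i < D" "slot_of i < D + 3"
    using m nth_hcirc_decode[of i] by auto
  have "j < hlen" "k < hlen"
    using children_hgate[OF dec(2-5), of j] children_hgate[OF dec(2-5), of k] dec(1) by simp_all
  moreover have "slot_of j = 0 \<or> slot_of k = 0 \<or>
      lo_of j \<le> hi_of j \<and> lo_of k \<le> hi_of k \<and> hi_of j < lo_of k"
    using hgate_MulG_cases[OF dec(2-5) dec(1)] .
  ultimately show "subcirc hcirc j \<inter> subcirc hcirc k = {} \<or>
      const_producing hcirc j \<or> const_producing hcirc k"
    using const_producing_slot0 disjoint_subcircs_hcirc by blast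
qed

lemma length_children_hgate:
  assumes "g < length C" "b < D"
  shows "length (children (hgate g a b t)) \<le> circ_size C + D + 1"
proof -
  have "length (children (C ! g)) \<le> (\<Sum>g\<leftarrow>C. length (children g))"
    using assms by (intro member_le_sum_list) auto
  then have "length (children (C ! g)) \<le> circ_size C"
    by (simp add: circ_size_def)
  then show ?thesis
    using assms by (cases "C ! g") (auto simp: hgate_def)
qed

lemma circ_size_hcirc: "circ_size hcirc \<le> hlen * (circ_size C + D + 2) + D + 1"
proof -
  have "(\<Sum>i\<leftarrow>[0..<hlen]. length (children (hgate (gate_of i) (lo_of i) (hi_of i) (slot_of i))))
      \<le> hlen * (circ_size C + D + 1)"
    using sum_list_mono[of "[0..<hlen]" _ "\<lambda>_. circ_size C + D + 1"]
      length_children_hgate decode_bounds by (simp add: sum_list_triv)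
  then show ?thesis
    by (simp add: circ_size_def hcirc_def hout_def comp_def algebra_simps)
qed

lemma hlen_le: "hlen \<le> circ_size C * D * D * (D + 3)"
  by (simp add: hlen_def circ_size_def)

end

lemma almost_MD_circuit_exists:
  assumes "wf_circuit n C" "constant_free C" "computes C p" "circ_size C \<le> S" "total_deg p < D"
  shows "\<exists>C'. wf_circuit n C' \<and> constant_free C' \<and> almost_MD C' \<and> computes C' p
           \<and> circ_size C' \<le> S * D * D * (D + 3) * (S + D + 2) + D + 1"
proof -
  have C: "topologically_ordered C" "C \<noteq> []"
    using assms(1) by (auto simp: wf_circuit_def topologically_ordered_def)
  interpret homogenization C D
    using C assms(5) by unfold_locales auto
  have "circ_size hcirc \<le> S * D * D * (D + 3) * (S + D + 2) + D + 1"
    using circ_size_hcirc hlen_le assms(4)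
    by (meson add_le_mono le_refl mult_le_mono order_trans)
  then show ?thesis
    using assms hcirc_wf hcirc_constant_free hcirc_almost_MD hcirc_computes
    by (metis computes_def)
qed

section \<open>Polynomial size bounds\<close>

lemma poly_bounded_iff: "poly_bounded g \<longleftrightarrow> (\<exists>c. \<forall>n. g n \<le> c * (n + 1) ^ c)"
proof
  assume "poly_bounded g"
  then obtain c where c: "g n \<le> c * n ^ c + c" for n
    unfolding poly_bounded_def by blast
  have "g n \<le> (2 * c) * (n + 1) ^ (2 * c)" for n
  proof -
    have "n ^ c \<le> (n + 1) ^ (2 * c)" "1 \<le> (n + 1) ^ (2 * c)"
      by (simp_all add: order_trans[OF power_mono power_increasing])
    then have "c * n ^ c + c * 1 \<le> c * (n + 1) ^ (2 * c) + c * (n + 1) ^ (2 * c)"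
      by (intro add_mono mult_le_mono2)
    then show ?thesis
      using c[of n] by simp
  qed
  then show "\<exists>c. \<forall>n. g n \<le> c * (n + 1) ^ c" by blast
next
  assume "\<exists>c. \<forall>n. g n \<le> c * (n + 1) ^ c"
  then obtain c where c: "g n \<le> c * (n + 1) ^ c" for n
    by blast
  have "g n \<le> (c * 2 ^ c) * n ^ (c * 2 ^ c) + c * 2 ^ c" for n
  proof (cases "n = 0")
    case False
    have "(n + 1) ^ c \<le> (2 * n) ^ c"
      using False by (intro power_mono) auto
    moreover have "n ^ c \<le> n ^ (c * 2 ^ c)"
      using False by (intro power_increasing) auto
    ultimately have "(n + 1) ^ c \<le> 2 ^ c * n ^ (c * 2 ^ c)"
      by (metis power_mult_distrib mult_le_mono2 order_trans)
    then have "c * (n + 1) ^ c \<le> (c * 2 ^ c) * n ^ (c * 2 ^ c)"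
      by (simp add: mult.assoc)
    then show ?thesis
      using c[of n] by linarith
  next
    case True
    have "g 0 \<le> c"
      using c[of 0] by simp
    also have "c \<le> c * 2 ^ c"
      by simp
    finally show ?thesis
      using True by simp
  qed
  then show "poly_bounded g"
    unfolding poly_bounded_def by blast
qed

lemma poly_bounded_const: "poly_bounded (\<lambda>n. k)"
  unfolding poly_bounded_def by (intro exI[of _ k]) simp

lemma poly_bounded_add:
  assumes "poly_bounded g" "poly_bounded h"
  shows "poly_bounded (\<lambda>n. g n + h n)"
proof -
  obtain c d where c: "g n \<le> c * (n + 1) ^ c" and d: "h n \<le> d * (n + 1) ^ d" for n
    using assms unfolding poly_bounded_iff by blast
  have "g n + h n \<le> (c + d) * (n + 1) ^ (c + d)" for n
  proof -
    have "(n + 1) ^ c \<le> (n + 1) ^ (c + d)" "(n + 1) ^ d \<le> (n + 1) ^ (c + d)"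
      by (simp_all add: power_increasing)
    then have "c * (n + 1) ^ c + d * (n + 1) ^ d \<le> c * (n + 1) ^ (c + d) + d * (n + 1) ^ (c + d)"
      by (intro add_mono mult_le_mono2)
    then show ?thesis
      using c[of n] d[of n] unfolding add_mult_distrib by linarith
  qed
  then show ?thesis
    unfolding poly_bounded_iff by blast
qed

lemma poly_bounded_mult:
  assumes "poly_bounded g" "poly_bounded h"
  shows "poly_bounded (\<lambda>n. g n * h n)"
proof -
  obtain c d where c: "g n \<le> c * (n + 1) ^ c" and d: "h n \<le> d * (n + 1) ^ d" for n
    using assms unfolding poly_bounded_iff by blast
  have "g n * h n \<le> (c * d + c + d) * (n + 1) ^ (c * d + c + d)" for n
  proof -
    have "g n * h n \<le> (c * d) * (n + 1) ^ (c + d)"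
      using mult_le_mono[OF c[of n] d[of n]] by (simp add: power_add ac_simps)
    also have "\<dots> \<le> (c * d + c + d) * (n + 1) ^ (c * d + c + d)"
      by (intro mult_le_mono power_increasing) auto
    finally show ?thesis .
  qed
  then show ?thesis
    unfolding poly_bounded_iff by blast
qed

theorem lemma5p2:
  fixes f :: "nat \<Rightarrow> mpoly"
  assumes vars: "\<And>n. vars_in n (f n)"
    and deg: "poly_bounded (\<lambda>n. total_deg (f n))"
    and circ: "\<exists>s. poly_bounded s \<and> (\<forall>n. \<exists>C. wf_circuit n C \<and> constant_free C
                   \<and> computes C (f n) \<and> circ_size C \<le> s n)"
  shows "\<exists>s. poly_bounded s \<and> (\<forall>n. \<exists>C. wf_circuit n C \<and> constant_free C \<and> almost_MD C
                   \<and> computes C (f n) \<and> circ_size C \<le> s n)"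
proof -
  obtain s where s: "poly_bounded s"
    and C: "\<And>n. \<exists>C. wf_circuit n C \<and> constant_free C \<and> computes C (f n) \<and> circ_size C \<le> s n"
    using circ by blast
  define D where "D n = total_deg (f n) + 1" for n
  let ?bound = "\<lambda>n. s n * D n * D n * (D n + 3) * (s n + D n + 2) + D n + 1"
  have "\<exists>C. wf_circuit n C \<and> constant_free C \<and> almost_MD C \<and> computes C (f n) \<and> circ_size C \<le> ?bound n"
    for n
    using C[of n] almost_MD_circuit_exists[of n _ "f n" "s n" "D n"] by (auto simp: D_def)
  moreover have "poly_bounded ?bound"
    using s deg unfolding D_def
    by (intro poly_bounded_add poly_bounded_mult poly_bounded_const)
  ultimately show ?thesis
    by blast
qed

end
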